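(* For all terms $M,M'$: if $M\bullet\iota\equiv M'\bullet\iota$ then $M\sim_\alpha M'$.
   Context: Let $\mathcal V$ (the variables) be a type with decidable equality, equipped with functions $\mathrm{encode}:\mathcal V\to\mathbb N$ and $\mathrm{decode}:\mathbb N\to\mathcal V$ such that $\mathrm{encode}(\mathrm{decode}\,n)=n$ for all $n$. Let $\mathcal C$ (the constants) be any type. Terms $\Lambda$ are generated by: $c\,k$ ($k\in\mathcal C$), $v\,x$ ($x\in\mathcal V$), $\lambda[x:A]M$, $\Pi[x:A]B$ and $M\cdot N$; in $\lambda[x:A]M$ and $\Pi[x:A]B$ the name $x$ binds in $M$ (resp. $B$) but not in $A$. Terms are raw first-order syntax (not identified up to renaming of bound variables) and $\equiv$ denotes syntactic identity. The list of free variables is $\mathrm{fv}(c\,k)=[\,]$, $\mathrm{fv}(v\,x)=[x]$, $\mathrm{fv}(\lambda[x:A]M)=\mathrm{fv}\,A\mathbin{+\!\!+}(\mathrm{fv}\,M-x)$, $\mathrm{fv}(\Pi[x:A]B)=\mathrm{fv}\,A\mathbin{+\!\!+}(\mathrm{fv}\,B-x)$, $\mathrm{fv}(M\cdot N)=\mathrm{fv}\,M\mathbin{+\!\!+}\mathrm{fv}\,N$, where $\mathbin{+\!\!+}$ is list concatenation and $xs-x$ deletes every occurrence of $x$ from $xs$. Fix a function $\chi':\mathrm{List}\,\mathbb N\to\mathbb N$ with $\chi'(ns)\notin ns$ for every list $ns$, and put $X'(xs)=\mathrm{decode}(\chi'(\mathrm{map}\ \mathrm{encode}\ xs))$. A substitution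 is any function $\sigma:\mathcal V\to\Lambda$; $\iota=v$ is the identity substitution; $(\sigma,x:=N)(y)=N$ if $y=x$ and $\sigma\,y$ otherwise. For a substitution $\sigma$ and a list $xs$ of variables, $X(\sigma,xs)=X'(\text{concatenation of the lists }\mathrm{fv}(\sigma\,y)\text{ for }y\in xs)$. The action $M\bullet\sigma$ is defined by structural recursion: $c\,k\bullet\sigma=c\,k$; $v\,x\bullet\sigma=\sigma\,x$; $(M\cdot N)\bullet\sigma=(M\bullet\sigma)\cdot(N\bullet\sigma)$; $(\lambda[x:A]M)\bullet\sigma=\lambda[y:A\bullet\sigma](M\bullet(\sigma,x:=v\,y))$ with $y=X(\sigma,\mathrm{fv}\,M-x)$; $(\Pi[x:A]B)\bullet\sigma=\Pi[y:A\bullet\sigma](B\bullet(\sigma,x:=v\,y))$ with $y=X(\sigma,\mathrm{fv}\,B-x)$. Unary substitution is $M[x:=N]=M\bullet(\iota,x:=N)$. $\alpha$-conversion $\sim_\alpha$ is the inductively defined relation with rules: $c\,k\sim_\alpha c\,k$; $v\,x\sim_\alpha v\,x$; $M\cdot N\sim_\alpha M'\cdot N'$ if $M\sim_\alpha M'$ and $N\sim_\alpha N'$; $\lambda[x:A]M\sim_\alpha\lambda[x':A']M'$ if $A\sim_\alpha A'$ and there is a variable $y$ with $y\notin\mathrm{fv}\,M-x$, $y\notin\mathrm{fv}\,M'-x'$ and $M[x:=v\,y]\equiv M'[x':=v\,y]$; and the same rule with $\Pi$ in place of $\lambda$. *)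

theory Defs
  imports Main
begin

text \<open>Raw first-order terms: constants, variables, lambda, Pi, application.
  In Lam x A M and Pi x A B the name x binds in M (resp. B) but not in A.\<close>
datatype ('c, 'v) trm =
    Const 'c
  | Var 'v
  | Lam 'v "('c, 'v) trm" "('c, 'v) trm"
  | Pi 'v "('c, 'v) trm" "('c, 'v) trm"
  | App "('c, 'v) trm" "('c, 'v) trm"

primrec fv :: "('c, 'v) trm \<Rightarrow> 'v list" where
  "fv (Const k) = []"
| "fv (Var x) = [x]"
| "fv (Lam x A M) = fv A @ removeAll x (fv M)"
| "fv (Pi x A B) = fv A @ removeAll x (fv B)"
| "fv (App M N) = fv M @ fv N"

definition fresh' :: "('v \<Rightarrow> nat) \<Rightarrow> (nat \<Rightarrow> 'v) \<Rightarrow> (nat list \<Rightarrow> nat) \<Rightarrow> 'v list \<Rightarrow> 'v" where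
  "fresh' enc dec chi xs = dec (chi (map enc xs))"

definition fresh :: "('v \<Rightarrow> nat) \<Rightarrow> (nat \<Rightarrow> 'v) \<Rightarrow> (nat list \<Rightarrow> nat)
    \<Rightarrow> ('v \<Rightarrow> ('c, 'v) trm) \<Rightarrow> 'v list \<Rightarrow> 'v" where
  "fresh enc dec chi \<sigma> xs = fresh' enc dec chi (concat (map (\<lambda>y. fv (\<sigma> y)) xs))"

text \<open>The action M \<bullet> sigma (capture-avoiding simultaneous substitution).\<close>
primrec sbst :: "('v \<Rightarrow> nat) \<Rightarrow> (nat \<Rightarrow> 'v) \<Rightarrow> (nat list \<Rightarrow> nat)
    \<Rightarrow> ('c, 'v) trm \<Rightarrow> ('v \<Rightarrow> ('c, 'v) trm) \<Rightarrow> ('c, 'v) trm" where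
  "sbst enc dec chi (Const k) \<sigma> = Const k"
| "sbst enc dec chi (Var x) \<sigma> = \<sigma> x"
| "sbst enc dec chi (App M N) \<sigma> = App (sbst enc dec chi M \<sigma>) (sbst enc dec chi N \<sigma>)"
| "sbst enc dec chi (Lam x A M) \<sigma> =
     (let y = fresh enc dec chi \<sigma> (removeAll x (fv M))
      in Lam y (sbst enc dec chi A \<sigma>) (sbst enc dec chi M (\<sigma>(x := Var y))))"
| "sbst enc dec chi (Pi x A B) \<sigma> =
     (let y = fresh enc dec chi \<sigma> (removeAll x (fv B))
      in Pi y (sbst enc dec chi A \<sigma>) (sbst enc dec chi B (\<sigma>(x := Var y))))"

text \<open>Unary substitution M[x := N] = M \<bullet> (iota, x := N), with iota = Var.\<close>
definition usubst :: "('v \<Rightarrow> nat) \<Rightarrow> (nat \<Rightarrow> 'v) \<Rightarrow> (nat list \<Rightarrow> nat)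
    \<Rightarrow> ('c, 'v) trm \<Rightarrow> 'v \<Rightarrow> ('c, 'v) trm \<Rightarrow> ('c, 'v) trm" where
  "usubst enc dec chi M x N = sbst enc dec chi M (Var(x := N))"

inductive alpha :: "('v \<Rightarrow> nat) \<Rightarrow> (nat \<Rightarrow> 'v) \<Rightarrow> (nat list \<Rightarrow> nat)
    \<Rightarrow> ('c, 'v) trm \<Rightarrow> ('c, 'v) trm \<Rightarrow> bool"
  for enc dec chi where
  alpha_const: "alpha enc dec chi (Const k) (Const k)"
| alpha_var: "alpha enc dec chi (Var x) (Var x)"
| alpha_app: "alpha enc dec chi M M' \<Longrightarrow> alpha enc dec chi N N'
     \<Longrightarrow> alpha enc dec chi (App M N) (App M' N')"
| alpha_lam: "alpha enc dec chi A A' \<Longrightarrow> y \<notin> set (removeAll x (fv M))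
     \<Longrightarrow> y \<notin> set (removeAll x' (fv M'))
     \<Longrightarrow> usubst enc dec chi M x (Var y) = usubst enc dec chi M' x' (Var y)
     \<Longrightarrow> alpha enc dec chi (Lam x A M) (Lam x' A' M')"
| alpha_pi: "alpha enc dec chi A A' \<Longrightarrow> y \<notin> set (removeAll x (fv B))
     \<Longrightarrow> y \<notin> set (removeAll x' (fv B'))
     \<Longrightarrow> usubst enc dec chi B x (Var y) = usubst enc dec chi B' x' (Var y)
     \<Longrightarrow> alpha enc dec chi (Pi x A B) (Pi x' A' B')"

end

theory Submission
  imports Defs
begin

text \<open>Under the identity substitution the fresh name chosen for a binder is X'
  applied to the free variables of its body other than the binder, and since encode
  is injective, the freshness of chi' makes it differ from all of them. So both sides of M \<bullet> \<iota> = M' \<bullet> \<iota> rename each pair of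
  corresponding binders to one common fresh name y, which is exactly the witness the
  alpha rule for that binder asks for; structural induction on M does the rest.\<close>

lemma fv_Var_concat: "concat (map (\<lambda>y. fv (Var y :: ('c, 'v) trm)) xs) = xs"
  by (induction xs) auto

lemma fresh_Var: "fresh enc dec chi (Var :: 'v \<Rightarrow> ('c, 'v) trm) xs = fresh' enc dec chi xs"
  unfolding fresh_def by (simp only: fv_Var_concat)

lemma fresh'_notin:
  assumes enc_dec: "\<And>n. enc (dec n) = n"
    and chi_fresh: "\<And>ns. chi ns \<notin> set ns"
  shows "fresh' enc dec chi xs \<notin> set xs"
proof
  assume "fresh' enc dec chi xs \<in> set xs"
  then have "enc (dec (chi (map enc xs))) \<in> set (map enc xs)"
    unfolding fresh'_def by simp
  then show False
    using chi_fresh enc_dec by metis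
qed

lemma sbst_Var_Lam:
  "sbst enc dec chi (Lam x A M) Var =
    (let y = fresh' enc dec chi (removeAll x (fv M))
     in Lam y (sbst enc dec chi A Var) (usubst enc dec chi M x (Var y)))"
  by (simp add: fresh_Var usubst_def)

lemma sbst_Var_Pi:
  "sbst enc dec chi (Pi x A B) Var =
    (let y = fresh' enc dec chi (removeAll x (fv B))
     in Pi y (sbst enc dec chi A Var) (usubst enc dec chi B x (Var y)))"
  by (simp add: fresh_Var usubst_def)

lemma sbst_Var_eq_LamD:
  assumes fresh: "\<And>xs. fresh' enc dec chi xs \<notin> set xs"
    and eq: "sbst enc dec chi (Lam x A B) Var = sbst enc dec chi M' Var"
  obtains x' A' B' y where "M' = Lam x' A' B'"
    and "sbst enc dec chi A Var = sbst enc dec chi A' Var"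
    and "y \<notin> set (removeAll x (fv B))" and "y \<notin> set (removeAll x' (fv B'))"
    and "usubst enc dec chi B x (Var y) = usubst enc dec chi B' x' (Var y)"
proof -
  obtain x' A' B' where M': "M' = Lam x' A' B'"
    using eq by (cases M') (auto simp: Let_def)
  define y where "y = fresh' enc dec chi (removeAll x (fv B))"
  have "y = fresh' enc dec chi (removeAll x' (fv B'))"
    and "sbst enc dec chi A Var = sbst enc dec chi A' Var"
    and "usubst enc dec chi B x (Var y) = usubst enc dec chi B' x' (Var y)"
    using eq unfolding M' sbst_Var_Lam Let_def trm.inject y_def[symmetric] by auto
  with M' show thesis
    using that fresh unfolding y_def by metis
qed

lemma sbst_Var_eq_PiD:
  assumes fresh: "\<And>xs. fresh' enc dec chi xs \<notin> set xs"
    and eq: "sbst enc dec chi (Pi x A B) Var = sbst enc dec chi M' Var"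
  obtains x' A' B' y where "M' = Pi x' A' B'"
    and "sbst enc dec chi A Var = sbst enc dec chi A' Var"
    and "y \<notin> set (removeAll x (fv B))" and "y \<notin> set (removeAll x' (fv B'))"
    and "usubst enc dec chi B x (Var y) = usubst enc dec chi B' x' (Var y)"
proof -
  obtain x' A' B' where M': "M' = Pi x' A' B'"
    using eq by (cases M') (auto simp: Let_def)
  define y where "y = fresh' enc dec chi (removeAll x (fv B))"
  have "y = fresh' enc dec chi (removeAll x' (fv B'))"
    and "sbst enc dec chi A Var = sbst enc dec chi A' Var"
    and "usubst enc dec chi B x (Var y) = usubst enc dec chi B' x' (Var y)"
    using eq unfolding M' sbst_Var_Pi Let_def trm.inject y_def[symmetric] by auto
  with M' show thesis
    using that fresh unfolding y_def by metis
qed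

theorem mainTheorem3:
  fixes enc :: "'v \<Rightarrow> nat" and dec :: "nat \<Rightarrow> 'v" and chi :: "nat list \<Rightarrow> nat"
    and M M' :: "('c, 'v) trm"
  assumes enc_dec: "\<And>n. enc (dec n) = n"
    and chi_fresh: "\<And>ns. chi ns \<notin> set ns"
    and eq: "sbst enc dec chi M Var = sbst enc dec chi M' Var"
  shows "alpha enc dec chi M M'"
proof -
  have fresh: "fresh' enc dec chi xs \<notin> set xs" for xs
    using enc_dec chi_fresh by (rule fresh'_notin)
  from eq show ?thesis
  proof (induction M arbitrary: M')
    case (Const k)
    then show ?case by (cases M') (auto simp: Let_def intro: alpha.intros)
  next
    case (Var x)
    then show ?case by (cases M') (auto simp: Let_def intro: alpha.intros)
  next
    case (App M N)
    then show ?case by (cases M') (auto simp: Let_def intro: alpha.intros)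
  next
    case (Lam x A B)
    from fresh Lam.prems show ?case
      by (rule sbst_Var_eq_LamD) (use Lam.IH(1) in \<open>blast intro: alpha_lam\<close>)
  next
    case (Pi x A B)
    from fresh Pi.prems show ?case
      by (rule sbst_Var_eq_PiD) (use Pi.IH(1) in \<open>blast intro: alpha_pi\<close>)
  qed
qed

end
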